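(* Let $p,\delta,\Delta$ be positive reals with $p<1$, let $n^-<n^+$ and $a$ be positive integers, and let $I=[n^-,n^+]$. Suppose that: (1) there is a function $f$ (differentiable on $I$) such that for each integer $n\in I$, $\Pr\big(\chi(G_{n,p})\in[f(n)-\Delta,f(n)+\Delta]\big)\ge0.99$; (2) for all real $n\in I$, $f'(n)\ge \frac1a+\delta$; (3) for each integer $n\in I$ there are integers $s_n,t_n$ with $\Pr\big(\chi(G_{n,p})\in[s_n,t_n]\big)\ge0.9$; (4) there is an increasing integer-valued function $r(n)$ such that for each integer $n\in I$ there is a coupling of $G_{n,p}$ and $G_{n+ar(n),p}$ with $\Pr\big(\chi(G_{n+ar(n),p})\le\chi(G_{n,p})+r(n)\big)\ge0.4$; (5) $n^+-n^-\ge 5\Delta/\delta$ and $n^+-n^-\ge 5a\,r(n^+)$. Then there is some integer $n\in I$ with $t_n-s_n>\frac{a\delta r(n)}{2}$.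
   Context: $G_{n,p}$ is the binomial random graph on $n$ labelled vertices with edge probability $p$; $\chi$ denotes chromatic number. A coupling of two random graphs is a joint probability space on which both are defined with their correct marginal distributions. *)

theory Defs
  imports "HOL-Analysis.Analysis" "HOL-Probability.Probability"
begin

text \<open>Simple graphs on the labelled vertex set {0..<n}, represented by their edge sets
(each edge is a 2-element set of vertices).\<close>

definition all_edges :: "nat \<Rightarrow> nat set set" where
  "all_edges n = {e. \<exists>u v. u < n \<and> v < n \<and> u \<noteq> v \<and> e = {u, v}}"

definition proper_colouring :: "nat \<Rightarrow> nat set set \<Rightarrow> nat \<Rightarrow> (nat \<Rightarrow> nat) \<Rightarrow> bool" where
  "proper_colouring n E k c \<longleftrightarrow>
     (\<forall>v<n. c v < k) \<and> (\<forall>u<n. \<forall>v<n. u \<noteq> v \<longrightarrow> {u, v} \<in> E \<longrightarrow> c u \<noteq> c v)"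

definition chromatic_number :: "nat \<Rightarrow> nat set set \<Rightarrow> nat" where
  "chromatic_number n E = (LEAST k. \<exists>c. proper_colouring n E k c)"

definition gnp :: "nat \<Rightarrow> real \<Rightarrow> nat set set pmf" where
  "gnp n p = map_pmf (\<lambda>b. {e \<in> all_edges n. b e})
                     (Pi_pmf (all_edges n) False (\<lambda>_. bernoulli_pmf p))"

end

theory Submission
  imports Defs
begin

(* Suppose every window [s n, t n] has width at most a \<delta> r(n) / 2 and follow the chain
   n_0 = nm, n_(i+1) = n_i + a r(n_i).  Events of probability 0.9, 0.9 (or 0.99) and 0.4 on a
   coupling must intersect, so s(n_(i+1)) and f(n_(i+1)) - \<Delta> are both at most
   t(n_i) + r(n_i) \<le> s(n_i) + (1/a + \<delta>/2) a r(n_i).  Hence along the chain s and f - \<Delta> stay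
   below the line of slope 1/a + \<delta>/2 through f(nm) + \<Delta>, whereas f grows with slope at least
   1/a + \<delta>.  The chain gets beyond 4/5 of the interval, where the gap \<delta>/2 (n - nm) exceeds 2 \<Delta>. *)

lemma measure_pmf_Int_ge:
  "measure_pmf.prob M A + measure_pmf.prob M B - 1 \<le> measure_pmf.prob M (A \<inter> B)"
proof -
  have "measure_pmf.prob M (A - B) \<le> measure_pmf.prob M (UNIV - B)"
    by (rule measure_pmf.finite_measure_mono) auto
  also have "\<dots> = 1 - measure_pmf.prob M B"
    using measure_pmf.prob_compl[of B M] by simp
  finally show ?thesis
    using measure_pmf.finite_measure_Diff'[of A M B] by simp
qed

lemma likely_events_meet:
  assumes "measure_pmf.prob M A \<ge> \<alpha>" "measure_pmf.prob M B \<ge> \<beta>" "\<alpha> + \<beta> > 1"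
  shows "\<exists>x. x \<in> A \<and> x \<in> B"
proof -
  have "measure_pmf.prob M (A \<inter> B) > 0"
    using measure_pmf_Int_ge[of M A B] assms by linarith
  then have "A \<inter> B \<noteq> {}" by auto
  then show ?thesis by blast
qed

lemma likely_coupled_events_meet:
  fixes \<mu> :: "('a \<times> 'b) pmf"
  assumes "map_pmf fst \<mu> = M" "map_pmf snd \<mu> = M'"
    and "measure_pmf.prob M A \<ge> \<alpha>" "measure_pmf.prob M' B \<ge> \<beta>" "measure_pmf.prob \<mu> C \<ge> \<gamma>"
    and "\<alpha> + \<beta> + \<gamma> > 2"
  shows "\<exists>x y. x \<in> A \<and> y \<in> B \<and> (x, y) \<in> C"
proof -
  have "measure_pmf.prob \<mu> (fst -` A) \<ge> \<alpha>" "measure_pmf.prob \<mu> (snd -` B) \<ge> \<beta>"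
    using assms(1-4) measure_map_pmf by metis+
  then have "measure_pmf.prob \<mu> (fst -` A \<inter> snd -` B) \<ge> \<alpha> + \<beta> - 1"
    using measure_pmf_Int_ge[of \<mu> "fst -` A" "snd -` B"] by linarith
  then have "\<exists>z. z \<in> fst -` A \<inter> snd -` B \<and> z \<in> C"
    using likely_events_meet[of "\<alpha> + \<beta> - 1" \<mu> "fst -` A \<inter> snd -` B" \<gamma> C] assms(5,6)
    by auto
  then show ?thesis by auto
qed

lemma coupled_upper_bound_transfers:
  fixes X :: "'a \<Rightarrow> nat" and Y :: "'b \<Rightarrow> nat"
  assumes "\<exists>\<mu>. map_pmf fst \<mu> = M \<and> map_pmf snd \<mu> = M' \<and>
               measure_pmf.prob \<mu> {(x, y). Y y \<le> X x + d} \<ge> \<gamma>"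
    and "measure_pmf.prob M {x. s \<le> int (X x) \<and> int (X x) \<le> t} \<ge> \<alpha>"
    and "measure_pmf.prob M' B \<ge> \<beta>" and "\<alpha> + \<beta> + \<gamma> > 2"
  shows "\<exists>y\<in>B. int (Y y) \<le> t + int d"
proof -
  from assms(1) obtain \<mu> where "map_pmf fst \<mu> = M" "map_pmf snd \<mu> = M'"
    "measure_pmf.prob \<mu> {(x, y). Y y \<le> X x + d} \<ge> \<gamma>"
    by blast
  from likely_coupled_events_meet[OF this(1,2) assms(2,3) this(3) assms(4)]
  show ?thesis
    by force
qed

lemma iteration_exits_interval:
  fixes g :: "nat \<Rightarrow> nat"
  assumes "Q n" "n \<le> hi"
    and progress: "\<And>n. Q n \<Longrightarrow> n \<le> hi \<Longrightarrow> n < g n"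
    and invariant: "\<And>n. Q n \<Longrightarrow> g n \<le> hi \<Longrightarrow> Q (g n)"
  shows "\<exists>m. Q m \<and> m \<le> hi \<and> hi < g m"
  using assms(1,2)
proof (induction "hi - n" arbitrary: n rule: less_induct)
  case less
  show ?case
  proof (cases "hi < g n")
    case True
    with less.prems show ?thesis by blast
  next
    case False
    then have "hi - g n < hi - n" "Q (g n)"
      using progress invariant less.prems by force+
    with False less.hyps show ?thesis by simp
  qed
qed

lemma growth_from_derivative_lower_bound:
  fixes f f' :: "real \<Rightarrow> real"
  assumes deriv: "\<And>x. a \<le> x \<Longrightarrow> x \<le> b \<Longrightarrow> (f has_real_derivative f' x) (at x within {a..b})"
    and lower: "\<And>x. a \<le> x \<Longrightarrow> x \<le> b \<Longrightarrow> c \<le> f' x"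
    and "a \<le> y" "y \<le> b"
  shows "c * (y - a) \<le> f y - f a"
proof -
  have "\<exists>\<xi>\<in>{a..y}. f y - f a = f' \<xi> * (y - a)"
  proof (rule mvt_very_simple)
    fix x assume "a \<le> x" "x \<le> y"
    with assms(4) have "(f has_real_derivative f' x) (at x within {a..y})"
      by (intro DERIV_subset[OF deriv]) auto
    then show "(f has_derivative (*) (f' x)) (at x within {a..y})"
      by (simp add: has_field_derivative_def)
  qed (fact \<open>a \<le> y\<close>)
  then obtain \<xi> where "a \<le> \<xi>" "\<xi> \<le> y" "f y - f a = f' \<xi> * (y - a)"
    by auto
  with lower[of \<xi>] \<open>a \<le> y\<close> \<open>y \<le> b\<close> show ?thesis
    by (simp add: mult_right_mono)
qed

lemma iteration_exit_below_linear_bound: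
  fixes s t :: "nat \<Rightarrow> int" and r :: "nat \<Rightarrow> nat" and F :: "nat \<Rightarrow> real"
  assumes a_pos: "0 < a" and "0 \<le> \<Delta>" and "n0 \<le> n1"
    and r_pos: "\<And>n. n0 \<le> n \<Longrightarrow> n \<le> n1 \<Longrightarrow> 0 < r n"
    and narrow: "\<And>n. n0 \<le> n \<Longrightarrow> n \<le> n1 \<Longrightarrow>
                   real_of_int (t n - s n) \<le> real a * \<delta> * real (r n) / 2"
    and start: "real_of_int (s n0) \<le> F n0 + \<Delta>"
    and step: "\<And>n. n0 \<le> n \<Longrightarrow> n + a * r n \<le> n1 \<Longrightarrow>
                 real_of_int (s (n + a * r n)) \<le> real_of_int (t n) + real (r n) \<and>
                 F (n + a * r n) - \<Delta> \<le> real_of_int (t n) + real (r n)"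
  shows "\<exists>m. n0 \<le> m \<and> m \<le> n1 \<and> n1 < m + a * r m \<and>
             F m - \<Delta> \<le> F n0 + \<Delta> + (1 / real a + \<delta> / 2) * (real m - real n0)"
proof -
  define B where "B n = F n0 + \<Delta> + (1 / real a + \<delta> / 2) * (real n - real n0)" for n
  let ?Q = "\<lambda>n. n0 \<le> n \<and> real_of_int (s n) \<le> B n \<and> F n - \<Delta> \<le> B n"
  have "\<exists>m. ?Q m \<and> m \<le> n1 \<and> n1 < m + a * r m"
  proof (rule iteration_exits_interval[where g = "\<lambda>n. n + a * r n"])
    show "?Q n0"
      using start \<open>0 \<le> \<Delta>\<close> by (simp add: B_def)
  next
    fix n assume "?Q n" "n \<le> n1"
    then show "n < n + a * r n"
      using r_pos a_pos by simp
  next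
    fix n assume Q: "?Q n" and le: "n + a * r n \<le> n1"
    then have "B (n + a * r n) = B n + real (r n) + real a * \<delta> * real (r n) / 2"
      using a_pos by (simp add: B_def field_simps)
    with Q step[OF _ le] narrow[of n] le show "?Q (n + a * r n)"
      by auto
  qed (fact \<open>n0 \<le> n1\<close>)
  then show ?thesis
    unfolding B_def by auto
qed

lemma narrow_windows_impossible:
  fixes s t :: "nat \<Rightarrow> int" and r :: "nat \<Rightarrow> nat" and F :: "nat \<Rightarrow> real"
  assumes delta_pos: "0 < \<delta>" and "0 \<le> \<Delta>" and a_pos: "0 < a" and n0_lt_n1: "n0 < n1"
    and r_pos: "\<And>n. n0 \<le> n \<Longrightarrow> n \<le> n1 \<Longrightarrow> 0 < r n"
    and r_mono: "mono_on {n0..n1} r"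
    and growth: "\<And>n. n0 \<le> n \<Longrightarrow> n \<le> n1 \<Longrightarrow>
                   (1 / real a + \<delta>) * (real n - real n0) \<le> F n - F n0"
    and width1: "5 * \<Delta> / \<delta> \<le> real (n1 - n0)"
    and width2: "5 * a * r n1 \<le> n1 - n0"
    and narrow: "\<And>n. n0 \<le> n \<Longrightarrow> n \<le> n1 \<Longrightarrow>
                   real_of_int (t n - s n) \<le> real a * \<delta> * real (r n) / 2"
    and start: "real_of_int (s n0) \<le> F n0 + \<Delta>"
    and step: "\<And>n. n0 \<le> n \<Longrightarrow> n + a * r n \<le> n1 \<Longrightarrow>
                 real_of_int (s (n + a * r n)) \<le> real_of_int (t n) + real (r n) \<and>
                 F (n + a * r n) - \<Delta> \<le> real_of_int (t n) + real (r n)"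
  shows False
proof -
  obtain m where m: "n0 \<le> m" "m \<le> n1" "n1 < m + a * r m"
    "F m - \<Delta> \<le> F n0 + \<Delta> + (1 / real a + \<delta> / 2) * (real m - real n0)"
    using iteration_exit_below_linear_bound[OF a_pos \<open>0 \<le> \<Delta>\<close> less_imp_le[OF n0_lt_n1]
        r_pos narrow start step]
    by blast
  have "(1 / real a + \<delta>) * (real m - real n0) =
      (1 / real a + \<delta> / 2) * (real m - real n0) + \<delta> * (real m - real n0) / 2"
    by (simp add: algebra_simps)
  then have "\<delta> * (real m - real n0) \<le> 4 * \<Delta>"
    using growth[OF m(1,2)] m(4) by linarith
  moreover have "4 * (real n1 - real n0) < 5 * (real m - real n0)"
  proof -
    have "a * r m \<le> a * r n1"
      using r_mono m(1,2) n0_lt_n1 by (simp add: mono_on_def)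
    then have "5 * n1 < 5 * m + (n1 - n0)"
      using m(3) width2 unfolding mult.assoc by linarith
    then show ?thesis
      using n0_lt_n1 by (simp add: of_nat_diff flip: of_nat_less_iff)
  qed
  then have "4 * (\<delta> * (real n1 - real n0)) < 5 * (\<delta> * (real m - real n0))"
    using mult_strict_left_mono[OF _ delta_pos] by (simp only: mult.left_commute)
  moreover have "5 * \<Delta> \<le> \<delta> * (real n1 - real n0)"
    using width1 n0_lt_n1 delta_pos by (simp add: pos_divide_le_eq mult.commute)
  ultimately show False
    by linarith
qed

theorem lemma18:
  fixes p \<delta> \<Delta> :: real
    and nm np a :: nat
    and f f' :: "real \<Rightarrow> real"
    and s t :: "nat \<Rightarrow> int"
    and r :: "nat \<Rightarrow> nat"
  assumes p_pos: "0 < p" and p_lt1: "p < 1"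
    and delta_pos: "0 < \<delta>" and Delta_pos: "0 < \<Delta>"
    and nm_pos: "0 < nm" and nm_lt_np: "nm < np" and a_pos: "0 < a"
    and f_deriv: "\<And>x. real nm \<le> x \<Longrightarrow> x \<le> real np \<Longrightarrow>
                   (f has_real_derivative f' x) (at x within {real nm..real np})"
    and f_conc: "\<And>n. nm \<le> n \<Longrightarrow> n \<le> np \<Longrightarrow>
        measure_pmf.prob (gnp n p)
          {G. f (real n) - \<Delta> \<le> real (chromatic_number n G) \<and>
              real (chromatic_number n G) \<le> f (real n) + \<Delta>} \<ge> 0.99"
    and f'_lower: "\<And>x. real nm \<le> x \<Longrightarrow> x \<le> real np \<Longrightarrow> f' x \<ge> 1 / real a + \<delta>"
    and st_conc: "\<And>n. nm \<le> n \<Longrightarrow> n \<le> np \<Longrightarrow>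
        measure_pmf.prob (gnp n p)
          {G. s n \<le> int (chromatic_number n G) \<and> int (chromatic_number n G) \<le> t n} \<ge> 0.9"
    and r_mono: "mono_on {nm..np} r"
    and r_pos: "\<And>n. nm \<le> n \<Longrightarrow> n \<le> np \<Longrightarrow> 0 < r n"
    and coupling: "\<And>n. nm \<le> n \<Longrightarrow> n \<le> np \<Longrightarrow>
        \<exists>\<mu> :: (nat set set \<times> nat set set) pmf.
           map_pmf fst \<mu> = gnp n p \<and> map_pmf snd \<mu> = gnp (n + a * r n) p \<and>
           measure_pmf.prob \<mu>
             {(G, H). chromatic_number (n + a * r n) H \<le> chromatic_number n G + r n} \<ge> 0.4"
    and width1: "real (np - nm) \<ge> 5 * \<Delta> / \<delta>"
    and width2: "np - nm \<ge> 5 * a * r np"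
  shows "\<exists>n. nm \<le> n \<and> n \<le> np \<and> real_of_int (t n - s n) > real a * \<delta> * real (r n) / 2"
proof (rule ccontr)
  assume "\<not> ?thesis"
  then have narrow: "real_of_int (t n - s n) \<le> real a * \<delta> * real (r n) / 2"
    if "nm \<le> n" "n \<le> np" for n
    using that by force
  have start: "real_of_int (s nm) \<le> f (real nm) + \<Delta>"
    using likely_events_meet[OF st_conc[OF order.refl] f_conc[OF order.refl]] nm_lt_np
    by fastforce
  have step: "real_of_int (s (n + a * r n)) \<le> real_of_int (t n) + real (r n) \<and>
      f (real (n + a * r n)) - \<Delta> \<le> real_of_int (t n) + real (r n)"
    if "nm \<le> n" "n + a * r n \<le> np" for n
  proof -
    have n: "nm \<le> n" "n \<le> np" and n': "nm \<le> n + a * r n" "n + a * r n \<le> np"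
      using that by auto
    note transfer = coupled_upper_bound_transfers[OF coupling[OF n] st_conc[OF n]]
    show ?thesis
      using transfer[OF st_conc[OF n']] transfer[OF f_conc[OF n']] by fastforce
  qed
  have growth: "(1 / real a + \<delta>) * (real n - real nm) \<le> f (real n) - f (real nm)"
    if "nm \<le> n" "n \<le> np" for n
    using growth_from_derivative_lower_bound[OF f_deriv f'_lower] that by simp
  show False
    using narrow_windows_impossible[where F = "\<lambda>n. f (real n)",
        OF delta_pos less_imp_le[OF Delta_pos] a_pos nm_lt_np r_pos r_mono growth width1 width2
           narrow start step] .
qed

end
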